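(* Let $x>0$, $y>0$. (1) If $x\ge1$ and $y\ge1$, then $\Gamma(x,y)\ge\max\Big(\frac{\Gamma(x)}{y^{x}},\frac{\Gamma(y)}{x^{y}}\Big)$. (2) If $x\ge1$ and $0<y\le1$, then $\frac{\Gamma(y)}{x^{y}}\le\Gamma(x,y)\le\frac{\Gamma(x)}{y^{x}}$. (3) If $0<x\le1$ and $y\ge1$, then $\frac{\Gamma(x)}{y^{x}}\le\Gamma(x,y)\le\frac{\Gamma(y)}{x^{y}}$. (4) If $0<x\le1$ and $0<y\le1$, then $\Gamma(x,y)\le\min\Big(\frac{\Gamma(x)}{y^{x}},\frac{\Gamma(y)}{x^{y}}\Big)$.
   Context: For $x>0,y>0$ the Bigamma function is the (convergent) improper integral $\Gamma(x,y):=\int_0^1(-\ln t)^{x-1}\big(-\ln(1-t)\big)^{y-1}\,dt$. $\Gamma(x)$ (one argument) denotes Euler's gamma function. *)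

theory Defs
  imports "HOL-Analysis.Analysis"
begin

text \<open>The integrand is nonnegative,
  so the improper Riemann integral equals the Lebesgue integral over the open interval.\<close>
definition Bigamma :: "real \<Rightarrow> real \<Rightarrow> real" where
  "Bigamma x y = (LBINT t:{0<..<1}. (- ln t) powr (x - 1) * (- ln (1 - t)) powr (y - 1))"

end

(*
  Since t \<le> -ln (1 - t) on (0,1), the integrand of Bigamma x y lies above or below
  (-ln t) powr (x - 1) * t powr (y - 1) according as y \<ge> 1 or y \<le> 1; the substitution
  t = exp (-u / y) turns the integral of the latter into Euler's integral, giving Gamma x / y powr x.
  The reflection t \<mapsto> 1 - t makes Bigamma symmetric, which yields the bounds with x and y exchanged.
*)
theory Submission
  imports Defs
begin

definition bigamma_integrand :: "real \<Rightarrow> real \<Rightarrow> real \<Rightarrow> real" where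
  "bigamma_integrand x y t = (- ln t) powr (x - 1) * (- ln (1 - t)) powr (y - 1)"

lemma Bigamma_eq_set_integral:
  "Bigamma x y = (LBINT t:{0<..<1}. bigamma_integrand x y t)"
  unfolding Bigamma_def bigamma_integrand_def ..

lemma neg_ln_powr_times_powr_has_absolute_integral:
  fixes a b :: real
  assumes a: "a > 0" and b: "b > 0"
  shows "(\<lambda>t. (- ln t) powr (a - 1) * t powr (b - 1)) absolutely_integrable_on {0<..<1}"
    and "integral {0<..<1} (\<lambda>t. (- ln t) powr (a - 1) * t powr (b - 1)) = Gamma a / b powr a"
proof -
  define g where "g = (\<lambda>u::real. exp (- u / b))"
  define f where "f = (\<lambda>t::real. (- ln t) powr (a - 1) * t powr (b - 1))"
  have g_deriv: "(g has_field_derivative - exp (- u / b) / b) (at u within {0<..})" for u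
    unfolding g_def using b by (auto intro!: derivative_eq_intros simp: field_simps)
  have g_inj: "inj_on g {0<..}"
    unfolding g_def inj_on_def using b by auto
  have g_image: "g ` {0<..} = {0<..<1}"
  proof (intro equalityI subsetI)
    fix t :: real assume "t \<in> {0<..<1}"
    then have "- b * ln t \<in> {0<..}" and "t = g (- b * ln t)"
      using b by (auto simp: g_def mult_pos_neg)
    then show "t \<in> g ` {0<..}" by blast
  qed (use b in \<open>auto simp: g_def\<close>)
  have substituted: "\<bar>- exp (- u / b) / b\<bar> * f (g u) = u powr (a - 1) / exp u / b powr a"
    if u: "u > 0" for u
  proof -
    have "\<bar>- exp (- u / b) / b\<bar> * f (g u)
        = (u / b) powr (a - 1) * (exp (- u / b) * exp (- u / b * (b - 1))) / b"
      unfolding f_def g_def using b by (simp add: powr_def)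
    also have "exp (- u / b) * exp (- u / b * (b - 1)) = exp (- u)"
      using b by (simp add: exp_add[symmetric] field_simps)
    also have "(u / b) powr (a - 1) = u powr (a - 1) / b powr (a - 1)"
      using u b by (simp add: powr_divide)
    also have "u powr (a - 1) / b powr (a - 1) * exp (- u) / b = u powr (a - 1) / exp u / b powr a"
      using b by (simp add: powr_diff exp_minus field_simps)
    finally show ?thesis .
  qed
  have "((\<lambda>u. u powr (a - 1) / exp u) has_integral Gamma a) {0<..}"
    using Gamma_integral_real[OF a]
    by (rule has_integral_spike_set_eq[THEN iffD1, rotated 2])
       (auto intro: negligible_subset[OF negligible_sing[of 0]])
  then have has_int:
      "((\<lambda>u. \<bar>- exp (- u / b) / b\<bar> * f (g u)) has_integral Gamma a / b powr a) {0<..}"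
    by (intro has_integral_eq[OF _ has_integral_divide]) (simp_all only: substituted greaterThan_iff)
  have "(\<lambda>u. \<bar>- exp (- u / b) / b\<bar> * f (g u)) absolutely_integrable_on {0<..}"
    using has_int
    by (subst absolutely_integrable_on_iff_nonneg) (auto simp: has_integral_integrable f_def)
  from this integral_unique[OF has_int]
  have "f absolutely_integrable_on g ` {0<..} \<and> integral (g ` {0<..}) f = Gamma a / b powr a"
    by (intro has_absolute_integral_change_of_variables_1'[OF _ g_deriv g_inj, THEN iffD1] conjI)
       simp_all
  then show "f absolutely_integrable_on {0<..<1}" "integral {0<..<1} f = Gamma a / b powr a"
    unfolding g_image by simp_all
qed

lemma neg_ln_powr_times_powr_set_integrable:
  fixes a b :: real
  assumes "a > 0" and "b > 0"
  shows "set_integrable lborel {0<..<1} (\<lambda>t. (- ln t) powr (a - 1) * t powr (b - 1))"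
    and "(LBINT t:{0<..<1}. (- ln t) powr (a - 1) * t powr (b - 1)) = Gamma a / b powr a"
proof -
  have "(\<lambda>t. indicat_real {0<..<1} t *\<^sub>R ((- ln t) powr (a - 1) * t powr (b - 1)))
      \<in> borel_measurable lborel"
    by measurable
  then show integrable: "set_integrable lborel {0<..<1} (\<lambda>t. (- ln t) powr (a - 1) * t powr (b - 1))"
    using neg_ln_powr_times_powr_has_absolute_integral(1)[OF assms]
    unfolding set_integrable_def by (simp add: integrable_completion)
  show "(LBINT t:{0<..<1}. (- ln t) powr (a - 1) * t powr (b - 1)) = Gamma a / b powr a"
    using set_borel_integral_eq_integral(2)[OF integrable]
          neg_ln_powr_times_powr_has_absolute_integral(2)[OF assms] by simp
qed

lemma set_integral_reflect_interval:
  fixes f :: "real \<Rightarrow> real"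
  shows "(LBINT t:{a<..<b}. f (a + b - t)) = (LBINT t:{a<..<b}. f t)"
proof -
  have "indicator {a<..<b} (a + b - t) = (indicator {a<..<b} t :: real)" for t
    by (auto simp: indicator_def)
  then show ?thesis
    unfolding set_lebesgue_integral_def
    using lborel_integral_real_affine[of "-1" "\<lambda>t. indicator {a<..<b} t *\<^sub>R f t" "a + b"]
    by simp
qed

lemma set_integrable_reflect_interval_iff:
  fixes f :: "real \<Rightarrow> real"
  shows "set_integrable lborel {a<..<b} (\<lambda>t. f (a + b - t))
    \<longleftrightarrow> set_integrable lborel {a<..<b} f"
proof -
  have "indicator {a<..<b} (a + b - t) = (indicator {a<..<b} t :: real)" for t
    by (auto simp: indicator_def)
  then show ?thesis
    unfolding set_integrable_def
    using lborel_integrable_real_affine_iff[of "-1" "\<lambda>t. indicator {a<..<b} t *\<^sub>R f t" "a + b"]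
    by simp
qed

lemma bigamma_integrand_reflect: "bigamma_integrand x y (1 - t) = bigamma_integrand y x t"
  unfolding bigamma_integrand_def by simp

lemma Bigamma_commute: "Bigamma y x = Bigamma x y"
  using set_integral_reflect_interval[where f="bigamma_integrand x y" and a=0 and b=1]
  by (simp add: Bigamma_eq_set_integral bigamma_integrand_reflect)

lemma le_neg_ln_one_minus:
  fixes t :: real
  assumes "t < 1"
  shows "t \<le> - ln (1 - t)"
  using ln_le_minus_one[of "1 - t"] assms by simp

lemma bigamma_integrand_ge:
  assumes "0 < t" "t < 1" "1 \<le> y"
  shows "(- ln t) powr (x - 1) * t powr (y - 1) \<le> bigamma_integrand x y t"
  unfolding bigamma_integrand_def
  using assms le_neg_ln_one_minus[of t] by (intro mult_left_mono powr_mono2) auto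

lemma bigamma_integrand_le:
  assumes "0 < t" "t < 1" "y \<le> 1"
  shows "bigamma_integrand x y t \<le> (- ln t) powr (x - 1) * t powr (y - 1)"
  unfolding bigamma_integrand_def
  using assms le_neg_ln_one_minus[of t] by (intro mult_left_mono powr_mono2') auto

lemma bigamma_integrand_le_sum:
  assumes "0 < t" "t < 1" "1 \<le> x" "1 \<le> y"
  shows "bigamma_integrand x y t \<le> (- ln t) powr (x - 1) + (- ln (1 - t)) powr (y - 1)"
proof -
  have neg_ln_le_one: "- ln s \<le> 1" if "1 / 2 \<le> s" for s :: real
    using that ln_2_less_1 ln_le_cancel_iff[of "1 / 2" s] by (simp add: ln_div)
  show ?thesis
  proof (cases "t \<le> 1 / 2")
    case True
    then have "(- ln (1 - t)) powr (y - 1) \<le> 1"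
      using assms neg_ln_le_one[of "1 - t"] by (intro powr_le1) auto
    then have "bigamma_integrand x y t \<le> (- ln t) powr (x - 1)"
      unfolding bigamma_integrand_def using mult_left_mono[of _ 1 "(- ln t) powr (x - 1)"] by simp
    then show ?thesis by (smt (verit) powr_ge_zero)
  next
    case False
    then have "(- ln t) powr (x - 1) \<le> 1"
      using assms neg_ln_le_one[of t] by (intro powr_le1) auto
    then have "bigamma_integrand x y t \<le> (- ln (1 - t)) powr (y - 1)"
      unfolding bigamma_integrand_def using mult_right_mono[of _ 1 "(- ln (1 - t)) powr (y - 1)"] by simp
    then show ?thesis by (smt (verit) powr_ge_zero)
  qed
qed

text \<open>Needed for the lower bounds: the Lebesgue integral of a non-integrable function is 0.\<close>
lemma set_integrable_bigamma_integrand: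
  assumes "x > 0" and "y > 0"
  shows "set_integrable lborel {0<..<1} (bigamma_integrand x y)"
proof -
  have measurable: "set_borel_measurable lborel {0<..<1} (bigamma_integrand x y)" for x y
    unfolding set_borel_measurable_def bigamma_integrand_def by measurable
  have second_le_one: "set_integrable lborel {0<..<1} (bigamma_integrand x y)"
    if "x > 0" "y > 0" "y \<le> 1" for x y
    by (rule set_integrable_bound[OF neg_ln_powr_times_powr_set_integrable(1)[OF that(1,2)] measurable])
       (use that bigamma_integrand_le in \<open>auto simp: bigamma_integrand_def\<close>)
  consider "y \<le> 1" | "x \<le> 1" | "1 \<le> x" "1 \<le> y" by linarith
  then show ?thesis
  proof cases
    case 1
    then show ?thesis using second_le_one assms by blast
  next
    case 2
    then show ?thesis
      using set_integrable_reflect_interval_iff[where f="bigamma_integrand x y" and a=0 and b=1]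
            second_le_one[of y x] assms
      by (simp add: bigamma_integrand_reflect)
  next
    case 3
    have unit_exponent: "set_integrable lborel {0<..<1} (\<lambda>t. (- ln t) powr (z - 1) * t powr (1 - 1))"
      if "z > 0" for z :: real
      using neg_ln_powr_times_powr_set_integrable(1)[of z 1] that by simp
    note set_integral_add(1)[OF unit_exponent[OF assms(1)]
        set_integrable_reflect_interval_iff[THEN iffD2, OF unit_exponent[OF assms(2)]]]
    then show ?thesis
      by (rule set_integrable_bound[OF _ measurable])
         (use 3 bigamma_integrand_le_sum in \<open>auto simp: bigamma_integrand_def\<close>)
  qed
qed

lemma Gamma_div_powr_le_Bigamma:
  assumes "x > 0" and "1 \<le> y"
  shows "Gamma x / y powr x \<le> Bigamma x y"
proof -
  have "(LBINT t:{0<..<1}. (- ln t) powr (x - 1) * t powr (y - 1)) \<le> Bigamma x y"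
    unfolding Bigamma_eq_set_integral using assms
    by (intro set_integral_mono neg_ln_powr_times_powr_set_integrable set_integrable_bigamma_integrand
        bigamma_integrand_ge) auto
  then show ?thesis
    using neg_ln_powr_times_powr_set_integrable(2) assms by simp
qed

lemma Bigamma_le_Gamma_div_powr:
  assumes "x > 0" and "y > 0" and "y \<le> 1"
  shows "Bigamma x y \<le> Gamma x / y powr x"
proof -
  have "Bigamma x y \<le> (LBINT t:{0<..<1}. (- ln t) powr (x - 1) * t powr (y - 1))"
    unfolding Bigamma_eq_set_integral using assms
    by (intro set_integral_mono neg_ln_powr_times_powr_set_integrable set_integrable_bigamma_integrand
        bigamma_integrand_le) auto
  then show ?thesis
    using neg_ln_powr_times_powr_set_integrable(2) assms by simp
qed

theorem mainTheorem6:
  fixes x y :: real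
  assumes "x > 0" and "y > 0"
  shows "(x \<ge> 1 \<and> y \<ge> 1 \<longrightarrow>
            Bigamma x y \<ge> max (Gamma x / y powr x) (Gamma y / x powr y))
       \<and> (x \<ge> 1 \<and> y \<le> 1 \<longrightarrow>
            Gamma y / x powr y \<le> Bigamma x y \<and> Bigamma x y \<le> Gamma x / y powr x)
       \<and> (x \<le> 1 \<and> y \<ge> 1 \<longrightarrow>
            Gamma x / y powr x \<le> Bigamma x y \<and> Bigamma x y \<le> Gamma y / x powr y)
       \<and> (x \<le> 1 \<and> y \<le> 1 \<longrightarrow>
            Bigamma x y \<le> min (Gamma x / y powr x) (Gamma y / x powr y))"
proof -
  have "Gamma y / x powr y \<le> Bigamma x y" if "1 \<le> x"
    using Gamma_div_powr_le_Bigamma[of y x] Bigamma_commute assms that by simp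
  moreover have "Bigamma x y \<le> Gamma y / x powr y" if "x \<le> 1"
    using Bigamma_le_Gamma_div_powr[of y x] Bigamma_commute assms that by simp
  ultimately show ?thesis
    using Gamma_div_powr_le_Bigamma[of x y] Bigamma_le_Gamma_div_powr[of x y] assms by auto
qed

end
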